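(* Let $T=\{t_1,\ldots,t_N\}$ be documents containing words from a dictionary $\{w_1,\ldots,w_D\}$, and let $\#(w)$ denote the number of documents containing word $w$. Let $h_1,\ldots,h_k$ be hash functions whose values $h_j(t)$ are independent and uniform on $[0,1]$. Consider the mapper MinHashSampleMap which, for each document $t$, each word $w$ in $t$, and each $j=1,\ldots,k$, emits $((w,j)\to h_j(t))$ if and only if $h_j(t)\le\frac{c\log(Dk)}{\#(w)}$, where $c=3$. Then the expected total number of emitted key-value pairs (shuffle size) is at most $cDk\log(Dk)=O(Dk\log(Dk))$; in particular, with $k=1/\epsilon$ for $\epsilon\in(0,1]$, it is $O((D/\epsilon)\log(D/\epsilon))$.
   Context: $\log$ denotes the natural logarithm. The shuffle size is the total number of key-value pairs emitted by all mappers. *)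

theory Defs
  imports "HOL-Probability.Probability"
begin

text \<open>Documents t_1..t_N are given as docs i (i < N), each a set of words.
  Hash values are indexed by (document index i, hash index j) with j in {1..k}.\<close>

definition minhash_c :: real where "minhash_c = 3"

definition doc_freq :: "nat \<Rightarrow> (nat \<Rightarrow> 'w set) \<Rightarrow> 'w \<Rightarrow> nat" where
  "doc_freq N docs w = card {i. i < N \<and> w \<in> docs i}"

definition minhash_sample_emitted ::
  "nat \<Rightarrow> (nat \<Rightarrow> 'w set) \<Rightarrow> nat \<Rightarrow> nat \<Rightarrow> (nat \<times> nat \<Rightarrow> real) \<Rightarrow> (nat \<times> 'w \<times> nat) set" where
  "minhash_sample_emitted N docs D k h =
     {(i, w, j). i < N \<and> w \<in> docs i \<and> j \<in> {1..k} \<and>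
        h (i, j) \<le> minhash_c * ln (real D * real k) / real (doc_freq N docs w)}"

definition shuffle_size ::
  "nat \<Rightarrow> (nat \<Rightarrow> 'w set) \<Rightarrow> nat \<Rightarrow> nat \<Rightarrow> (nat \<times> nat \<Rightarrow> real) \<Rightarrow> nat" where
  "shuffle_size N docs D k h = card (minhash_sample_emitted N docs D k h)"

definition hash_space :: "nat \<Rightarrow> nat \<Rightarrow> (nat \<times> nat \<Rightarrow> real) measure" where
  "hash_space N k = PiM ({..<N} \<times> {1..k}) (\<lambda>_. uniform_measure lborel {0..1::real})"

end

theory Submission imports Defs begin

text \<open>Each emitted pair (t, w, j) is an event about the single uniform value h_j(t), so by
  linearity the expected shuffle size is the sum over all triples of their emission thresholds.
  Regrouping by word, w occurs in #(w) documents, and k #(w) c log(Dk) / #(w) = c k log(Dk);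
  summing over the D words gives c D k log(Dk).\<close>

lemma emeasure_PiM_uniform_component_le:
  fixes t :: real
  assumes "x \<in> I" "t \<ge> 0"
  shows "emeasure (PiM I (\<lambda>_. uniform_measure lborel {0..1}))
           {h \<in> space (PiM I (\<lambda>_. uniform_measure lborel {0..1})). h x \<le> t} \<le> ennreal t"
proof -
  define U where "U = uniform_measure lborel {0..1::real}"
  define M where "M = PiM I (\<lambda>_. U)"
  have component: "(\<lambda>h. h x) \<in> M \<rightarrow>\<^sub>M U"
    unfolding M_def using assms(1) by (rule measurable_component_singleton)
  have "{h \<in> space M. h x \<le> t} = (\<lambda>h. h x) -` {..t} \<inter> space M" by auto
  then have "emeasure M {h \<in> space M. h x \<le> t} = emeasure (distr M U (\<lambda>h. h x)) {..t}"
    using component by (simp add: emeasure_distr U_def)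
  also have "distr M U (\<lambda>h. h x) = U"
    unfolding M_def U_def using assms(1)
    by (intro distr_PiM_component prob_space_uniform_measure) auto
  also have "emeasure U {..t} = emeasure lborel ({0..1} \<inter> {..t})"
    by (simp add: U_def divide_ennreal_def)
  also have "\<dots> \<le> emeasure lborel {0..t}" by (intro emeasure_mono) auto
  also have "\<dots> = ennreal t" using assms(2) by simp
  finally show ?thesis unfolding M_def U_def .
qed

lemma nn_integral_card_Collect:
  assumes "finite I" "\<And>x. x \<in> I \<Longrightarrow> {h \<in> space M. P x h} \<in> sets M"
  shows "(\<integral>\<^sup>+ h. ennreal (real (card {x \<in> I. P x h})) \<partial>M)
           = (\<Sum>x\<in>I. emeasure M {h \<in> space M. P x h})"
proof -
  have "ennreal (real (card {x \<in> I. P x h})) = (\<Sum>x\<in>I. indicator {h \<in> space M. P x h} h)"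
    if "h \<in> space M" for h
  proof -
    have "card {x \<in> I. P x h} = (\<Sum>x\<in>I. if P x h then 1 else 0)"
      using assms(1) by (simp add: sum.inter_filter[symmetric])
    then show ?thesis
      using that by (auto simp: indicator_def simp flip: sum_ennreal intro!: sum.cong)
  qed
  then have "(\<integral>\<^sup>+ h. ennreal (real (card {x \<in> I. P x h})) \<partial>M)
      = (\<integral>\<^sup>+ h. (\<Sum>x\<in>I. indicator {h \<in> space M. P x h} h) \<partial>M)"
    by (rule nn_integral_cong)
  also have "\<dots> = (\<Sum>x\<in>I. emeasure M {h \<in> space M. P x h})"
    using assms by (simp add: nn_integral_sum)
  finally show ?thesis .
qed

lemma sum_doc_words_eq_doc_freq:
  fixes f :: "'w \<Rightarrow> 'a::comm_semiring_1"
  assumes "finite W" "\<And>i. i < N \<Longrightarrow> docs i \<subseteq> W"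
  shows "(\<Sum>i<N. \<Sum>w\<in>docs i. f w) = (\<Sum>w\<in>W. of_nat (doc_freq N docs w) * f w)"
proof -
  have "(\<Sum>i<N. \<Sum>w\<in>docs i. f w) = (\<Sum>i<N. \<Sum>w\<in>W. if w \<in> docs i then f w else 0)"
  proof (rule sum.cong[OF refl])
    fix i assume "i \<in> {..<N}"
    then have "docs i = W \<inter> docs i" using assms(2) by auto
    then show "(\<Sum>w\<in>docs i. f w) = (\<Sum>w\<in>W. if w \<in> docs i then f w else 0)"
      using assms(1) by (metis sum.inter_restrict)
  qed
  also have "\<dots> = (\<Sum>w\<in>W. \<Sum>i<N. if w \<in> docs i then f w else 0)"
    by (rule sum.swap)
  also have "\<dots> = (\<Sum>w\<in>W. of_nat (doc_freq N docs w) * f w)"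
    by (intro sum.cong refl) (simp add: sum.If_cases doc_freq_def Int_def)
  finally show ?thesis .
qed

definition minhash_threshold :: "nat \<Rightarrow> (nat \<Rightarrow> 'w set) \<Rightarrow> nat \<Rightarrow> nat \<Rightarrow> 'w \<Rightarrow> real" where
  "minhash_threshold N docs D k w = minhash_c * ln (real D * real k) / real (doc_freq N docs w)"

text \<open>Since Dk is a natural number, ln (Dk) is either ln 0 = 0 or nonnegative.\<close>

lemma minhash_c_ln_nonneg: "0 \<le> minhash_c * ln (real D * real k)"
proof -
  have "0 \<le> ln (real (D * k))" by (cases "D * k = 0") (auto simp del: of_nat_mult)
  then show ?thesis by (simp add: minhash_c_def)
qed

lemma minhash_threshold_nonneg: "0 \<le> minhash_threshold N docs D k w"
  using minhash_c_ln_nonneg[of D k] by (simp add: minhash_threshold_def)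

lemma doc_freq_mult_minhash_threshold_le:
  "real (doc_freq N docs w) * minhash_threshold N docs D k w \<le> minhash_c * ln (real D * real k)"
  using minhash_c_ln_nonneg[of D k]
  by (cases "doc_freq N docs w = 0") (auto simp: minhash_threshold_def)

lemma minhash_sample_emitted_eq:
  "minhash_sample_emitted N docs D k h =
     {x \<in> (SIGMA i:{..<N}. SIGMA w:docs i. {1..k}).
        h (fst x, snd (snd x)) \<le> minhash_threshold N docs D k (fst (snd x))}"
  by (auto simp: minhash_sample_emitted_def minhash_threshold_def)

lemma expected_shuffle_size_le_sum_thresholds:
  assumes "\<And>i. i < N \<Longrightarrow> finite (docs i)"
  shows "(\<integral>\<^sup>+ h. ennreal (real (shuffle_size N docs D k h)) \<partial>hash_space N k)
           \<le> ennreal (\<Sum>i<N. \<Sum>w\<in>docs i. real k * minhash_threshold N docs D k w)"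
proof -
  define I where "I = (SIGMA i:{..<N}. SIGMA w:docs i. {1..k})"
  define t where "t = minhash_threshold N docs D k"
  have "finite I" unfolding I_def using assms by (auto intro!: finite_SigmaI)
  have "(\<integral>\<^sup>+ h. ennreal (real (shuffle_size N docs D k h)) \<partial>hash_space N k)
      = (\<Sum>x\<in>I. emeasure (hash_space N k)
           {h \<in> space (hash_space N k). h (fst x, snd (snd x)) \<le> t (fst (snd x))})"
    unfolding shuffle_size_def minhash_sample_emitted_eq I_def[symmetric] t_def[symmetric]
    using \<open>finite I\<close>
    by (intro nn_integral_card_Collect) (auto simp: I_def hash_space_def)
  also have "\<dots> \<le> (\<Sum>x\<in>I. ennreal (t (fst (snd x))))"
    unfolding hash_space_def t_def
    by (intro sum_mono emeasure_PiM_uniform_component_le minhash_threshold_nonneg)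
       (auto simp: I_def)
  also have "\<dots> = ennreal (\<Sum>x\<in>I. t (fst (snd x)))"
    by (simp add: sum_ennreal t_def minhash_threshold_nonneg)
  also have "(\<Sum>x\<in>I. t (fst (snd x))) = (\<Sum>i<N. \<Sum>(w, j)\<in>docs i \<times> {1..k}. t w)"
    unfolding I_def using assms by (subst sum.Sigma) (auto simp: split_def)
  also have "\<dots> = (\<Sum>i<N. \<Sum>w\<in>docs i. real k * t w)"
    by (simp add: sum.cartesian_product[symmetric])
  finally show ?thesis unfolding t_def .
qed

theorem theorem6:
  fixes W :: "'w set" and docs :: "nat \<Rightarrow> 'w set" and N D k :: nat
  assumes "finite W" and "card W = D"
    and "\<And>i. i < N \<Longrightarrow> docs i \<subseteq> W"
    and "k \<ge> 1"
  shows "(\<integral>\<^sup>+ h. ennreal (real (shuffle_size N docs D k h)) \<partial>hash_space N k)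
           \<le> ennreal (minhash_c * real D * real k * ln (real D * real k))
         \<and> (\<forall>\<epsilon>::real. 0 < \<epsilon> \<and> \<epsilon> \<le> 1 \<and> real k = 1 / \<epsilon> \<longrightarrow>
           (\<integral>\<^sup>+ h. ennreal (real (shuffle_size N docs D k h)) \<partial>hash_space N k)
           \<le> ennreal (minhash_c * (real D / \<epsilon>) * ln (real D / \<epsilon>)))"
proof -
  let ?t = "minhash_threshold N docs D k"
  have "\<And>i. i < N \<Longrightarrow> finite (docs i)"
    using assms(1,3) finite_subset by blast
  then have "(\<integral>\<^sup>+ h. ennreal (real (shuffle_size N docs D k h)) \<partial>hash_space N k)
      \<le> ennreal (\<Sum>i<N. \<Sum>w\<in>docs i. real k * ?t w)"
    by (rule expected_shuffle_size_le_sum_thresholds)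
  also have "(\<Sum>i<N. \<Sum>w\<in>docs i. real k * ?t w)
      = (\<Sum>w\<in>W. real k * (real (doc_freq N docs w) * ?t w))"
    using assms(1,3) by (simp add: sum_doc_words_eq_doc_freq ac_simps)
  also have "\<dots> \<le> (\<Sum>w\<in>W. real k * (minhash_c * ln (real D * real k)))"
    by (intro sum_mono mult_left_mono doc_freq_mult_minhash_threshold_le) simp
  also have "\<dots> = minhash_c * real D * real k * ln (real D * real k)"
    using assms(2) by simp
  finally have "(\<integral>\<^sup>+ h. ennreal (real (shuffle_size N docs D k h)) \<partial>hash_space N k)
      \<le> ennreal (minhash_c * real D * real k * ln (real D * real k))"
    by (simp add: ennreal_leI)
  moreover have "real D / \<epsilon> = real D * real k" if "real k = 1 / \<epsilon>" for \<epsilon> :: real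
    using that by (simp add: divide_inverse)
  ultimately show ?thesis by (auto simp: mult.assoc)
qed

end
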